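(* Let $F_1=e^{i(\alpha+\beta)}+e^{i\gamma}$, $F_2=-e^{i\beta}+e^{i(\alpha+\gamma)}$, $F_3=-e^{i\alpha}+e^{i(\beta+\gamma)}$, $F_4=-1+e^{i(\alpha+\beta+\gamma)}$, and $f_k=|F_k(\alpha,\beta,\gamma)|^2$ for $1\le k\le4$. Then each $f_k$ is extremal in the class $Q(1,1,1)$.
   Context: $\sigma(1,1,1)$ is the set of trigonometric polynomials $f(\alpha,\beta,\gamma)=\sum_{|k|,|\ell|,|m|\le1}q(k,\ell,m)e^{i(k\alpha+\ell\beta+m\gamma)}$ with $f\ge0$ for all real $\alpha,\beta,\gamma$; $Q(1,1,1)$ is the set of $f\in\sigma(1,1,1)$ of the form $f=\sum_{j=1}^r|F_j|^2$ with $F_j=\sum_{k,\ell,m\in\{0,1\}}q_j(k,\ell,m)e^{i(k\alpha+\ell\beta+m\gamma)}$. An element $f$ of a convex cone $U$ is called extremal in $U$ if whenever $f=g+h$ with $g,h\in U$, both $g$ and $h$ are nonnegative multiples of $f$. *)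

theory Defs
  imports Complex_Main
begin

definition hpoly :: "(nat \<Rightarrow> nat \<Rightarrow> nat \<Rightarrow> complex) \<Rightarrow> real \<Rightarrow> real \<Rightarrow> real \<Rightarrow> complex" where
  "hpoly p \<alpha> \<beta> \<gamma> =
     (\<Sum>k\<in>{0,1}. \<Sum>l\<in>{0,1}. \<Sum>m\<in>{0,1}.
        p k l m * exp (\<i> * complex_of_real (real k * \<alpha> + real l * \<beta> + real m * \<gamma>)))"

definition Q111 :: "(real \<Rightarrow> real \<Rightarrow> real \<Rightarrow> real) set" where
  "Q111 = {f. \<exists>(r::nat) (ps :: nat \<Rightarrow> nat \<Rightarrow> nat \<Rightarrow> nat \<Rightarrow> complex).
              f = (\<lambda>\<alpha> \<beta> \<gamma>. \<Sum>j<r. (cmod (hpoly (ps j) \<alpha> \<beta> \<gamma>))\<^sup>2)}"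

definition extremal_in :: "(real \<Rightarrow> real \<Rightarrow> real \<Rightarrow> real) \<Rightarrow> (real \<Rightarrow> real \<Rightarrow> real \<Rightarrow> real) set \<Rightarrow> bool" where
  "extremal_in f U \<longleftrightarrow> f \<in> U \<and>
     (\<forall>g\<in>U. \<forall>h\<in>U. f = (\<lambda>\<alpha> \<beta> \<gamma>. g \<alpha> \<beta> \<gamma> + h \<alpha> \<beta> \<gamma>) \<longrightarrow>
        (\<exists>c\<ge>0. g = (\<lambda>\<alpha> \<beta> \<gamma>. c * f \<alpha> \<beta> \<gamma>)) \<and> (\<exists>d\<ge>0. h = (\<lambda>\<alpha> \<beta> \<gamma>. d * f \<alpha> \<beta> \<gamma>)))"

definition F1 :: "real \<Rightarrow> real \<Rightarrow> real \<Rightarrow> complex" where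
  "F1 \<alpha> \<beta> \<gamma> = exp (\<i> * complex_of_real (\<alpha> + \<beta>)) + exp (\<i> * complex_of_real \<gamma>)"
definition F2 :: "real \<Rightarrow> real \<Rightarrow> real \<Rightarrow> complex" where
  "F2 \<alpha> \<beta> \<gamma> = - exp (\<i> * complex_of_real \<beta>) + exp (\<i> * complex_of_real (\<alpha> + \<gamma>))"
definition F3 :: "real \<Rightarrow> real \<Rightarrow> real \<Rightarrow> complex" where
  "F3 \<alpha> \<beta> \<gamma> = - exp (\<i> * complex_of_real \<alpha>) + exp (\<i> * complex_of_real (\<beta> + \<gamma>))"
definition F4 :: "real \<Rightarrow> real \<Rightarrow> real \<Rightarrow> complex" where
  "F4 \<alpha> \<beta> \<gamma> = - 1 + exp (\<i> * complex_of_real (\<alpha> + \<beta> + \<gamma>))"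

end

(*
  If |F|^2 = g + h with g = \<Sum>j |G_j|^2 and h in Q(1,1,1), then every G_j vanishes wherever F
  does. The zero set of each F_k is a 2-torus (for F_1 it is \<gamma> = \<alpha> + \<beta> + \<pi>), and on it G_j
  restricts to a polynomial of degree at most 2 in each of two unimodular variables. Such a
  polynomial vanishing on the torus is zero, which leaves only the coefficients of F_k free:
  G_j = k_j F_k, hence g = (\<Sum>j |k_j|^2) |F_k|^2.
*)
theory Submission
  imports Defs
begin

definition trilinear :: "(nat \<Rightarrow> nat \<Rightarrow> nat \<Rightarrow> complex) \<Rightarrow> complex \<Rightarrow> complex \<Rightarrow> complex \<Rightarrow> complex" where
  "trilinear p x y z = (\<Sum>k\<in>{0,1}. \<Sum>l\<in>{0,1}. \<Sum>m\<in>{0,1}. p k l m * x ^ k * y ^ l * z ^ m)"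

lemma trilinear_expand:
  "trilinear p x y z =
     p 0 0 0 + p 1 0 0 * x + p 0 1 0 * y + p 0 0 1 * z + p 1 1 0 * x * y + p 1 0 1 * x * z
     + p 0 1 1 * y * z + p 1 1 1 * x * y * z"
  unfolding trilinear_def by (simp add: algebra_simps)

lemma hpoly_eq_trilinear:
  "hpoly p a b c = trilinear p (exp (\<i> * a)) (exp (\<i> * b)) (exp (\<i> * c))"
  unfolding hpoly_def trilinear_def by (simp add: distrib_left exp_add)

lemma unimodular_eq_exp_Arg:
  assumes "cmod z = 1"
  shows "exp (\<i> * complex_of_real (Arg z)) = z"
proof -
  from assms have "z \<noteq> 0" by auto
  with assms show ?thesis by (simp add: cis_Arg sgn_eq flip: cis_conv_exp)
qed

lemma quadratic_vanishing_on_unit_circle: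
  fixes a b c :: complex
  assumes "\<And>x. cmod x = 1 \<Longrightarrow> a + b * x + c * x\<^sup>2 = 0"
  shows "a = 0 \<and> b = 0 \<and> c = 0"
proof -
  have at_1: "a + b + c = 0" using assms[of 1] by simp
  have at_minus_1: "a - b + c = 0" using assms[of "-1"] by simp
  have at_i: "a + \<i> * b - c = 0" using assms[of \<i>] by (simp add: power2_eq_square algebra_simps)
  have "2 * b = (a + b + c) - (a - b + c)" by (simp add: algebra_simps)
  with at_1 at_minus_1 have b: "b = 0" by simp
  have "2 * a = (a + b + c) + (a + \<i> * b - c)" using b by (simp add: algebra_simps)
  with at_1 at_i b show ?thesis by simp
qed

lemma biquadratic_vanishing_on_torus:
  fixes a0 a1 a2 b0 b1 b2 c0 c1 c2 :: complex
  assumes "\<And>x y. cmod x = 1 \<Longrightarrow> cmod y = 1 \<Longrightarrow>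
    (a0 + a1 * y + a2 * y\<^sup>2) + (b0 + b1 * y + b2 * y\<^sup>2) * x + (c0 + c1 * y + c2 * y\<^sup>2) * x\<^sup>2 = 0"
  shows "a0 = 0 \<and> a1 = 0 \<and> a2 = 0 \<and> b0 = 0 \<and> b1 = 0 \<and> b2 = 0 \<and> c0 = 0 \<and> c1 = 0 \<and> c2 = 0"
proof -
  have "a0 + a1 * y + a2 * y\<^sup>2 = 0 \<and> b0 + b1 * y + b2 * y\<^sup>2 = 0 \<and> c0 + c1 * y + c2 * y\<^sup>2 = 0"
    if "cmod y = 1" for y
    using quadratic_vanishing_on_unit_circle assms that by blast
  then show ?thesis
    using quadratic_vanishing_on_unit_circle[of a0 a1 a2] quadratic_vanishing_on_unit_circle[of b0 b1 b2]
      quadratic_vanishing_on_unit_circle[of c0 c1 c2] by blast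
qed

definition vanishing_implies_multiple :: "(real \<Rightarrow> real \<Rightarrow> real \<Rightarrow> complex) \<Rightarrow> bool" where
  "vanishing_implies_multiple F \<longleftrightarrow>
     (\<forall>p. (\<forall>a b c. F a b c = 0 \<longrightarrow> hpoly p a b c = 0) \<longrightarrow> (\<exists>k. \<forall>a b c. hpoly p a b c = k * F a b c))"

lemma vanishing_implies_multiple_F1: "vanishing_implies_multiple F1"
  unfolding vanishing_implies_multiple_def
proof (intro allI impI)
  fix p assume vanish: "\<forall>a b c. F1 a b c = 0 \<longrightarrow> hpoly p a b c = 0"
  have "trilinear p x y (- (x * y)) = 0" if unit: "cmod x = 1" "cmod y = 1" for x y
  proof -
    obtain s t :: real where x: "exp (\<i> * s) = x" and y: "exp (\<i> * t) = y"
      using unimodular_eq_exp_Arg[OF unit(1)] unimodular_eq_exp_Arg[OF unit(2)] by blast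
    have z: "exp (\<i> * complex_of_real (s + t + pi)) = - (x * y)"
      using x y by (simp add: distrib_left exp_add flip: cis_conv_exp)
    have "F1 s t (s + t + pi) = 0"
      using x y z unfolding F1_def by (simp add: distrib_left exp_add)
    with vanish have "hpoly p s t (s + t + pi) = 0" by blast
    then show ?thesis unfolding hpoly_eq_trilinear x y z .
  qed
  then have "p 0 0 0 = 0 \<and> p 0 1 0 = 0 \<and> p 1 0 0 = 0 \<and> p 1 1 0 - p 0 0 1 = 0 \<and> p 0 1 1 = 0
     \<and> p 1 0 1 = 0 \<and> p 1 1 1 = 0"
    using biquadratic_vanishing_on_torus[of "p 0 0 0" "p 0 1 0" 0 "p 1 0 0" "p 1 1 0 - p 0 0 1" "- p 0 1 1"
      0 "- p 1 0 1" "- p 1 1 1"]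
    by (simp add: trilinear_expand algebra_simps power2_eq_square)
  then have "\<forall>a b c. hpoly p a b c = p 0 0 1 * F1 a b c"
    by (simp add: hpoly_eq_trilinear trilinear_expand F1_def exp_add algebra_simps)
  then show "\<exists>k. \<forall>a b c. hpoly p a b c = k * F1 a b c" by blast
qed

lemma vanishing_implies_multiple_F2: "vanishing_implies_multiple F2"
  unfolding vanishing_implies_multiple_def
proof (intro allI impI)
  fix p assume vanish: "\<forall>a b c. F2 a b c = 0 \<longrightarrow> hpoly p a b c = 0"
  have "trilinear p x (x * y) y = 0" if unit: "cmod x = 1" "cmod y = 1" for x y
  proof -
    obtain s t :: real where x: "exp (\<i> * s) = x" and y: "exp (\<i> * t) = y"
      using unimodular_eq_exp_Arg[OF unit(1)] unimodular_eq_exp_Arg[OF unit(2)] by blast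
    have xy: "exp (\<i> * complex_of_real (s + t)) = x * y"
      using x y by (simp add: distrib_left exp_add)
    have "F2 s (s + t) t = 0"
      using x y xy unfolding F2_def by (simp add: distrib_left exp_add)
    with vanish have "hpoly p s (s + t) t = 0" by blast
    then show ?thesis unfolding hpoly_eq_trilinear x y xy .
  qed
  then have "p 0 0 0 = 0 \<and> p 0 0 1 = 0 \<and> p 1 0 0 = 0 \<and> p 0 1 0 + p 1 0 1 = 0 \<and> p 0 1 1 = 0
     \<and> p 1 1 0 = 0 \<and> p 1 1 1 = 0"
    using biquadratic_vanishing_on_torus[of "p 0 0 0" "p 0 0 1" 0 "p 1 0 0" "p 0 1 0 + p 1 0 1" "p 0 1 1"
      0 "p 1 1 0" "p 1 1 1"]
    by (simp add: trilinear_expand algebra_simps power2_eq_square)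
  then have "\<forall>a b c. hpoly p a b c = p 1 0 1 * F2 a b c"
    by (simp add: hpoly_eq_trilinear trilinear_expand F2_def exp_add algebra_simps add_eq_0_iff)
  then show "\<exists>k. \<forall>a b c. hpoly p a b c = k * F2 a b c" by blast
qed

lemma vanishing_implies_multiple_F3: "vanishing_implies_multiple F3"
  unfolding vanishing_implies_multiple_def
proof (intro allI impI)
  fix p assume vanish: "\<forall>a b c. F3 a b c = 0 \<longrightarrow> hpoly p a b c = 0"
  have "trilinear p (x * y) x y = 0" if unit: "cmod x = 1" "cmod y = 1" for x y
  proof -
    obtain s t :: real where x: "exp (\<i> * s) = x" and y: "exp (\<i> * t) = y"
      using unimodular_eq_exp_Arg[OF unit(1)] unimodular_eq_exp_Arg[OF unit(2)] by blast
    have xy: "exp (\<i> * complex_of_real (s + t)) = x * y"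
      using x y by (simp add: distrib_left exp_add)
    have "F3 (s + t) s t = 0"
      using x y xy unfolding F3_def by (simp add: distrib_left exp_add)
    with vanish have "hpoly p (s + t) s t = 0" by blast
    then show ?thesis unfolding hpoly_eq_trilinear x y xy .
  qed
  then have "p 0 0 0 = 0 \<and> p 0 0 1 = 0 \<and> p 0 1 0 = 0 \<and> p 1 0 0 + p 0 1 1 = 0 \<and> p 1 0 1 = 0
     \<and> p 1 1 0 = 0 \<and> p 1 1 1 = 0"
    using biquadratic_vanishing_on_torus[of "p 0 0 0" "p 0 0 1" 0 "p 0 1 0" "p 1 0 0 + p 0 1 1" "p 1 0 1"
      0 "p 1 1 0" "p 1 1 1"]
    by (simp add: trilinear_expand algebra_simps power2_eq_square)
  then have "\<forall>a b c. hpoly p a b c = p 0 1 1 * F3 a b c"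
    by (simp add: hpoly_eq_trilinear trilinear_expand F3_def exp_add algebra_simps add_eq_0_iff)
  then show "\<exists>k. \<forall>a b c. hpoly p a b c = k * F3 a b c" by blast
qed

(* Here the torus is \<alpha> + \<beta> + \<gamma> = 0, so exp (i \<gamma>) = 1 / (x y); clearing the denominator
   gives the biquadratic polynomial. *)
lemma vanishing_implies_multiple_F4: "vanishing_implies_multiple F4"
  unfolding vanishing_implies_multiple_def
proof (intro allI impI)
  fix p assume vanish: "\<forall>a b c. F4 a b c = 0 \<longrightarrow> hpoly p a b c = 0"
  have "p 0 0 1 + p 0 1 1 * y + (p 1 0 1 + (p 0 0 0 + p 1 1 1) * y + p 0 1 0 * y\<^sup>2) * x
      + (p 1 0 0 * y + p 1 1 0 * y\<^sup>2) * x\<^sup>2 = 0"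
    if unit: "cmod x = 1" "cmod y = 1" for x y
  proof -
    obtain s t :: real where x: "exp (\<i> * s) = x" and y: "exp (\<i> * t) = y"
      using unimodular_eq_exp_Arg[OF unit(1)] unimodular_eq_exp_Arg[OF unit(2)] by blast
    have z: "exp (\<i> * complex_of_real (- (s + t))) = inverse (x * y)"
      unfolding x [symmetric] y [symmetric] by (simp add: algebra_simps flip: exp_add exp_minus)
    have "F4 s t (- (s + t)) = 0"
      unfolding F4_def by simp
    with vanish have "hpoly p s t (- (s + t)) = 0" by blast
    then have "trilinear p x y (inverse (x * y)) = 0"
      unfolding hpoly_eq_trilinear x y z .
    moreover from unit have "x \<noteq> 0" "y \<noteq> 0" by auto
    ultimately show ?thesis
      by (simp add: trilinear_expand field_simps power2_eq_square)
  qed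
  then have "p 0 0 1 = 0 \<and> p 0 1 1 = 0 \<and> p 1 0 1 = 0 \<and> p 0 0 0 + p 1 1 1 = 0 \<and> p 0 1 0 = 0
     \<and> p 1 0 0 = 0 \<and> p 1 1 0 = 0"
    using biquadratic_vanishing_on_torus[of "p 0 0 1" "p 0 1 1" 0 "p 1 0 1" "p 0 0 0 + p 1 1 1" "p 0 1 0"
      0 "p 1 0 0" "p 1 1 0"]
    by simp
  then have "\<forall>a b c. hpoly p a b c = p 1 1 1 * F4 a b c"
    by (simp add: hpoly_eq_trilinear trilinear_expand F4_def exp_add algebra_simps add_eq_0_iff)
  then show "\<exists>k. \<forall>a b c. hpoly p a b c = k * F4 a b c" by blast
qed

lemma Q111_nonneg: "g \<in> Q111 \<Longrightarrow> 0 \<le> g a b c"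
  unfolding Q111_def by (auto intro: sum_nonneg)

lemma Q111_summand_multiple:
  assumes F: "vanishing_implies_multiple F" and g: "g \<in> Q111" and h: "h \<in> Q111"
    and split: "\<And>a b c. (cmod (F a b c))\<^sup>2 = g a b c + h a b c"
  shows "\<exists>d\<ge>0. g = (\<lambda>a b c. d * (cmod (F a b c))\<^sup>2)"
proof -
  obtain r :: nat and ps where g_def: "g = (\<lambda>a b c. \<Sum>j<r. (cmod (hpoly (ps j) a b c))\<^sup>2)"
    using g unfolding Q111_def mem_Collect_eq by blast
  have "\<forall>j\<in>{..<r}. \<exists>k. \<forall>a b c. hpoly (ps j) a b c = k * F a b c"
  proof
    fix j assume j: "j \<in> {..<r}"
    have "hpoly (ps j) a b c = 0" if "F a b c = 0" for a b c
    proof -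
      have "g a b c = 0"
        using split[of a b c] that Q111_nonneg[OF g, of a b c] Q111_nonneg[OF h, of a b c] by simp
      with j show ?thesis by (simp add: g_def sum_nonneg_eq_0_iff)
    qed
    with F show "\<exists>k. \<forall>a b c. hpoly (ps j) a b c = k * F a b c"
      unfolding vanishing_implies_multiple_def by blast
  qed
  from bchoice [OF this] obtain k
    where k: "\<forall>j\<in>{..<r}. \<forall>a b c. hpoly (ps j) a b c = k j * F a b c"
    by blast
  have "g = (\<lambda>a b c. (\<Sum>j<r. (cmod (k j))\<^sup>2) * (cmod (F a b c))\<^sup>2)"
    by (simp add: g_def k norm_mult power_mult_distrib sum_distrib_right)
  moreover have "0 \<le> (\<Sum>j<r. (cmod (k j))\<^sup>2)" by (simp add: sum_nonneg)
  ultimately show ?thesis by blast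
qed

lemma extremal_in_Q111_if_vanishing_implies_multiple:
  assumes rep: "F = hpoly q" and F: "vanishing_implies_multiple F"
  shows "extremal_in (\<lambda>a b c. (cmod (F a b c))\<^sup>2) Q111"
  unfolding extremal_in_def
proof (intro conjI ballI impI)
  show "(\<lambda>a b c. (cmod (F a b c))\<^sup>2) \<in> Q111"
    unfolding Q111_def rep by (intro CollectI exI[of _ 1] exI[of _ "\<lambda>_. q"]) simp
next
  fix g h assume g: "g \<in> Q111" and h: "h \<in> Q111"
    and split: "(\<lambda>a b c. (cmod (F a b c))\<^sup>2) = (\<lambda>a b c. g a b c + h a b c)"
  have pointwise: "(cmod (F a b c))\<^sup>2 = g a b c + h a b c" for a b c
    using split by (simp add: fun_eq_iff)
  show "\<exists>c\<ge>0. g = (\<lambda>a b c'. c * (cmod (F a b c'))\<^sup>2)"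
    using Q111_summand_multiple [OF F g h pointwise] .
  show "\<exists>d\<ge>0. h = (\<lambda>a b c. d * (cmod (F a b c))\<^sup>2)"
    using pointwise by (intro Q111_summand_multiple [OF F h g]) (simp add: add.commute)
qed

lemma F1_eq_hpoly: "F1 = hpoly (\<lambda>k l m. if (k, l, m) = (1, 1, 0) \<or> (k, l, m) = (0, 0, 1) then 1 else 0)"
  by (intro ext) (simp add: hpoly_eq_trilinear trilinear_expand F1_def distrib_left exp_add)

lemma F2_eq_hpoly:
  "F2 = hpoly (\<lambda>k l m. if (k, l, m) = (1, 0, 1) then 1 else if (k, l, m) = (0, 1, 0) then -1 else 0)"
  by (intro ext) (simp add: hpoly_eq_trilinear trilinear_expand F2_def distrib_left exp_add)

lemma F3_eq_hpoly:
  "F3 = hpoly (\<lambda>k l m. if (k, l, m) = (0, 1, 1) then 1 else if (k, l, m) = (1, 0, 0) then -1 else 0)"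
  by (intro ext) (simp add: hpoly_eq_trilinear trilinear_expand F3_def distrib_left exp_add)

lemma F4_eq_hpoly:
  "F4 = hpoly (\<lambda>k l m. if (k, l, m) = (1, 1, 1) then 1 else if (k, l, m) = (0, 0, 0) then -1 else 0)"
  by (intro ext) (simp add: hpoly_eq_trilinear trilinear_expand F4_def distrib_left exp_add)

theorem proposition3:
  shows "\<forall>F\<in>{F1, F2, F3, F4}.
           extremal_in (\<lambda>\<alpha> \<beta> \<gamma>. (cmod (F \<alpha> \<beta> \<gamma>))\<^sup>2) Q111"
  using extremal_in_Q111_if_vanishing_implies_multiple[OF F1_eq_hpoly vanishing_implies_multiple_F1]
    extremal_in_Q111_if_vanishing_implies_multiple[OF F2_eq_hpoly vanishing_implies_multiple_F2]
    extremal_in_Q111_if_vanishing_implies_multiple[OF F3_eq_hpoly vanishing_implies_multiple_F3]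
    extremal_in_Q111_if_vanishing_implies_multiple[OF F4_eq_hpoly vanishing_implies_multiple_F4]
  by blast

end
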